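(* Let a control system $S$ and a target system $T$ have ontic state spaces $\Omega_S$ and $\Omega_T$ (each $\mathbb{Z}_d^{2n}$ or $\mathbb{R}^{2n}$ for the respective number of elementary systems, of the same type). Let $V_S^i$ be an isotropic subspace of $\Omega_S$ and $\vec v_{s,1}^i,\dots,\vec v_{s,k}^i\in\Omega_S$ valuations such that the cosets $(V_S^i)^\perp+\vec v_{s,j}^i$, $j=1,\dots,k$, form a partition of $\Omega_S$, so that $(V_S^i,\vec v_{s,j}^i)$ are the possible states of $S$. Let $(V_T^i,\vec v_T^i)$ be the initial valid epistemic state of $T$ and let $S_{ST}$ be a symplectic transformation of $\Omega_S\oplus\Omega_T$. For each $j$, let $(V_T^{f,j},\vec v_T^{f,j})$ denote the marginal on $T$ of the state obtained by applying $S_{ST}$ to the product state $(V_S^i\oplus V_T^i,\ \vec v_{s,j}^i\oplus\vec v_T^i)$. Then for any $j,l$, the marginal target states for $j$ and $l$ are either identical or orthogonal. Moreover, grouping the indices $j$ into classes of identical marginal target states, every class contains the same number of indices.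
   Context: Toy theory (quadrature formalism): ontic states $\vec m\in\Omega$, coordinates $(q_1,p_1,\dots)$; observables $\vec f\in\Omega$ with value $\vec f^T\vec m$; Poisson bracket $[\vec f,\vec g]=\sum_i(f_{2i-1}g_{2i}-f_{2i}g_{2i-1})$. A valid epistemic state $(V,\vec v)$ has $V$ an isotropic subspace/submodule ($[\vec f,\vec g]=0$ for $\vec f,\vec g\in V$); its compatible ontic states are $V^\perp+\vec v$ with $V^\perp=\{\vec m:\vec f^T\vec m=0\ \forall\vec f\in V\}$, uniformly distributed. A symplectic matrix (preserving the Poisson bracket) $\Sigma$ acts by $(V,\vec v)\mapsto((\Sigma^T)^{-1}V,\Sigma\vec v)$. The marginal on $T$ of a joint state is the projection of the set of compatible ontic states (and of the uniform distribution) onto $\Omega_T$. Two epistemic states are orthogonal if their sets of compatible ontic states are disjoint. Physically, this describes an agent preparing $T$ conditionally on the outcome $j$ of a measurement of $S$. *)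

theory Defs
  imports Complex_Main
begin

text \<open>Scalars: either Z_d (d >= 2) or the reals, up to ring isomorphism.\<close>

definition is_Zd_ring :: "'a::comm_ring_1 itself \<Rightarrow> bool" where
  "is_Zd_ring _ \<longleftrightarrow> finite (UNIV::'a set) \<and> card (UNIV::'a set) \<ge> 2 \<and> surj (of_int :: int \<Rightarrow> 'a)"

definition is_real_ring :: "'a::comm_ring_1 itself \<Rightarrow> bool" where
  "is_real_ring _ \<longleftrightarrow> (\<exists>\<phi>::'a \<Rightarrow> real. bij \<phi> \<and> \<phi> 1 = 1 \<and>
      (\<forall>x y. \<phi> (x + y) = \<phi> x + \<phi> y \<and> \<phi> (x * y) = \<phi> x * \<phi> y))"

text \<open>Ontic states / observables of n elementary systems indexed by the finite type 'n:
  functions on 'n \<times> bool, where (i,False) is q_i and (i,True) is p_i.\<close>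

type_synonym ('a,'n) vecs = "'n \<times> bool \<Rightarrow> 'a"
type_synonym ('a,'n) epi = "('a,'n) vecs set \<times> ('a,'n) vecs"

definition dotp :: "('a::comm_ring_1,'n::finite) vecs \<Rightarrow> ('a,'n) vecs \<Rightarrow> 'a" where
  "dotp f m = (\<Sum>i\<in>UNIV. f i * m i)"

definition pbracket :: "('a::comm_ring_1,'n::finite) vecs \<Rightarrow> ('a,'n) vecs \<Rightarrow> 'a" where
  "pbracket f g = (\<Sum>i\<in>UNIV. f (i,False) * g (i,True) - f (i,True) * g (i,False))"

definition submodule :: "('a::comm_ring_1,'n) vecs set \<Rightarrow> bool" where
  "submodule V \<longleftrightarrow> (\<lambda>_. 0) \<in> V \<and> (\<forall>f\<in>V. \<forall>g\<in>V. (\<lambda>i. f i + g i) \<in> V)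
     \<and> (\<forall>c. \<forall>f\<in>V. (\<lambda>i. c * f i) \<in> V)"

definition isotropic :: "('a::comm_ring_1,'n::finite) vecs set \<Rightarrow> bool" where
  "isotropic V \<longleftrightarrow> submodule V \<and> (\<forall>f\<in>V. \<forall>g\<in>V. pbracket f g = 0)"

definition perp :: "('a::comm_ring_1,'n::finite) vecs set \<Rightarrow> ('a,'n) vecs set" where
  "perp V = {m. \<forall>f\<in>V. dotp f m = 0}"

text \<open>Set of ontic states compatible with an epistemic state (V, v): V^perp + v.\<close>
definition compat :: "('a::comm_ring_1,'n::finite) epi \<Rightarrow> ('a,'n) vecs set" where
  "compat E = (\<lambda>m. \<lambda>i. m i + snd E i) ` perp (fst E)"

type_synonym ('a,'n) mat = "'n \<times> bool \<Rightarrow> 'n \<times> bool \<Rightarrow> 'a"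

definition mat_app :: "('a::comm_ring_1,'n::finite) mat \<Rightarrow> ('a,'n) vecs \<Rightarrow> ('a,'n) vecs" where
  "mat_app M v = (\<lambda>i. \<Sum>j\<in>UNIV. M i j * v j)"

definition mat_transp :: "('a,'n) mat \<Rightarrow> ('a,'n) mat" where
  "mat_transp M = (\<lambda>i j. M j i)"

definition symplectic :: "('a::comm_ring_1,'n::finite) mat \<Rightarrow> bool" where
  "symplectic M \<longleftrightarrow> (\<forall>f g. pbracket (mat_app M f) (mat_app M g) = pbracket f g)"

text \<open>Action of a symplectic matrix: (V,v) maps to ((M^T)^{-1} V, M v), where
  (M^T)^{-1} V = {f. M^T f \<in> V}.\<close>
definition sympl_act :: "('a::comm_ring_1,'n::finite) mat \<Rightarrow> ('a,'n) epi \<Rightarrow> ('a,'n) epi" where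
  "sympl_act M E = ({f. mat_app (mat_transp M) f \<in> fst E}, mat_app M (snd E))"

text \<open>Direct sums: systems S ('s) and T ('t) combine to index type 's + 't.\<close>
definition projS :: "('a,'s+'t) vecs \<Rightarrow> ('a,'s) vecs" where
  "projS m = (\<lambda>(i,b). m (Inl i, b))"

definition projT :: "('a,'s+'t) vecs \<Rightarrow> ('a,'t) vecs" where
  "projT m = (\<lambda>(i,b). m (Inr i, b))"

definition vsum :: "('a,'s) vecs \<Rightarrow> ('a,'t) vecs \<Rightarrow> ('a,'s+'t) vecs" where
  "vsum u w = (\<lambda>(x,b). case x of Inl i \<Rightarrow> u (i,b) | Inr i \<Rightarrow> w (i,b))"

definition subsum :: "('a,'s) vecs set \<Rightarrow> ('a,'t) vecs set \<Rightarrow> ('a,'s+'t) vecs set" where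
  "subsum V W = {f. projS f \<in> V \<and> projT f \<in> W}"

definition prod_state :: "('a,'s) epi \<Rightarrow> ('a,'t) epi \<Rightarrow> ('a,'s+'t) epi" where
  "prod_state E F = (subsum (fst E) (fst F), vsum (snd E) (snd F))"

text \<open>Marginal on T: projection of the set of compatible ontic states (the uniform
  distribution on it pushes forward to the uniform distribution on this image).\<close>
definition marginalT :: "('a::comm_ring_1,'s::finite+'t::finite) epi \<Rightarrow> ('a,'t) vecs set" where
  "marginalT E = projT ` compat E"

end

theory Submission
  imports Defs "HOL-Library.Function_Algebras"
begin

text \<open>The ontic states compatible with the evolved product state for outcome \<open>j\<close> form a coset
  of \<open>perp V'\<close>, where \<open>V' = (\<Sigma>\<^sup>T)\<^sup>-\<^sup>1 (VS \<oplus> VT)\<close> does not depend on \<open>j\<close>; hence every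
  marginal is a coset of the one subgroup \<open>P = projT (perp V')\<close>, with representative
  \<open>\<psi> (vs j) + c\<close> for an additive map \<open>\<psi>\<close> that sends \<open>perp VS\<close> into \<open>P\<close>. Cosets of \<open>P\<close> are
  equal or disjoint, and since the \<open>vs j\<close> are a transversal of \<open>perp VS\<close>, the outcome classes
  are the fibres of the induced homomorphism \<open>\<Omega>\<^sub>S / perp VS \<rightarrow> \<Omega>\<^sub>T / P\<close>; translation by
  \<open>vs l - vs j\<close> maps one fibre injectively into another, so all classes have the same size.\<close>

definition add_subgroup :: "'a::ab_group_add set \<Rightarrow> bool" where
  "add_subgroup P \<longleftrightarrow> 0 \<in> P \<and> (\<forall>a\<in>P. \<forall>b\<in>P. a - b \<in> P)"

definition add_coset :: "'a::ab_group_add set \<Rightarrow> 'a \<Rightarrow> 'a set" where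
  "add_coset P a = {y. y - a \<in> P}"

lemma add_subgroup_zero: "add_subgroup P \<Longrightarrow> 0 \<in> P"
  unfolding add_subgroup_def by blast

lemma add_subgroup_diff: "add_subgroup P \<Longrightarrow> a \<in> P \<Longrightarrow> b \<in> P \<Longrightarrow> a - b \<in> P"
  unfolding add_subgroup_def by blast

lemma add_subgroup_add:
  assumes "add_subgroup P" "a \<in> P" "b \<in> P"
  shows "a + b \<in> P"
proof -
  have "0 - b \<in> P" using assms add_subgroup_zero add_subgroup_diff by blast
  then have "a - (0 - b) \<in> P" using assms add_subgroup_diff by blast
  then show ?thesis by simp
qed

lemma add_subgroup_image:
  assumes h: "additive h" and P: "add_subgroup P"
  shows "add_subgroup (h ` P)"
  unfolding add_subgroup_def
proof (intro conjI ballI)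
  show "0 \<in> h ` P"
    by (rule image_eqI[where x = 0]) (simp_all add: additive.zero[OF h] add_subgroup_zero[OF P])
  fix a b assume "a \<in> h ` P" "b \<in> h ` P"
  then obtain x y where "x \<in> P" "y \<in> P" "a = h x" "b = h y" by blast
  then show "a - b \<in> h ` P"
    by (intro image_eqI[where x = "x - y"]) (simp_all add: additive.diff[OF h] add_subgroup_diff[OF P])
qed

lemma add_coset_eq_iff:
  assumes "add_subgroup P"
  shows "add_coset P a = add_coset P b \<longleftrightarrow> a - b \<in> P"
proof
  assume "add_coset P a = add_coset P b"
  moreover have "a \<in> add_coset P a"
    using assms add_subgroup_zero by (simp add: add_coset_def)
  ultimately show "a - b \<in> P" by (simp add: add_coset_def)
next
  assume ab: "a - b \<in> P"
  have "y - a \<in> P \<longleftrightarrow> y - b \<in> P" for y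
    using add_subgroup_add[OF assms _ ab, of "y - a"] add_subgroup_diff[OF assms _ ab, of "y - b"]
    by auto
  then show "add_coset P a = add_coset P b" by (simp add: add_coset_def)
qed

lemma add_coset_eq_or_disjoint:
  assumes "add_subgroup P"
  shows "add_coset P a = add_coset P b \<or> add_coset P a \<inter> add_coset P b = {}"
proof (rule disjCI)
  assume "add_coset P a \<inter> add_coset P b \<noteq> {}"
  then obtain y where "y - a \<in> P" "y - b \<in> P" by (auto simp: add_coset_def)
  then have "(y - b) - (y - a) \<in> P" using assms add_subgroup_diff by blast
  moreover have "(y - b) - (y - a) = a - b" by (simp add: algebra_simps)
  ultimately have "a - b \<in> P" by simp
  then show "add_coset P a = add_coset P b" using assms add_coset_eq_iff by blast
qed

lemma image_add_coset:
  assumes "additive h"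
  shows "h ` add_coset P a = add_coset (h ` P) (h a)"
proof (intro set_eqI iffI)
  fix y assume "y \<in> h ` add_coset P a"
  then obtain x where "x - a \<in> P" "y = h x" by (auto simp: add_coset_def)
  then have "y - h a = h (x - a)" using additive.diff[OF assms] by simp
  then show "y \<in> add_coset (h ` P) (h a)"
    using \<open>x - a \<in> P\<close> by (simp add: add_coset_def)
next
  fix y assume "y \<in> add_coset (h ` P) (h a)"
  then obtain p where "p \<in> P" "y = h p + h a" by (auto simp: add_coset_def algebra_simps)
  then show "y \<in> h ` add_coset P a"
    using additive.add[OF assms] by (auto simp: add_coset_def intro!: image_eqI[of _ _ "p + a"])
qed

lemma card_transversal_class_le:
  fixes psi :: "'a::ab_group_add \<Rightarrow> 'b::ab_group_add"
  assumes psi: "additive psi" and Q: "add_subgroup Q" and P: "add_subgroup P"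
    and psi_Q: "psi ` Q \<subseteq> P"
    and cover: "(\<Union>j\<in>I. add_coset Q (vs j)) = UNIV"
    and disj: "\<forall>j\<in>I. \<forall>l\<in>I. j \<noteq> l \<longrightarrow> add_coset Q (vs j) \<inter> add_coset Q (vs l) = {}"
    and I: "finite I" "l \<in> I"
  shows "card {j'\<in>I. psi (vs j') - psi (vs j) \<in> P} \<le> card {l'\<in>I. psi (vs l') - psi (vs l) \<in> P}"
proof -
  have "\<forall>x. \<exists>i. i \<in> I \<and> x - vs i \<in> Q"
    using cover by (auto simp: add_coset_def set_eq_iff)
  then obtain idx where idx: "\<And>x. idx x \<in> I" "\<And>x. x - vs (idx x) \<in> Q" by metis
  have idx_unique: "i1 = i2" if "i1 \<in> I" "i2 \<in> I" "vs i1 - vs i2 \<in> Q" for i1 i2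
  proof -
    have "vs i1 \<in> add_coset Q (vs i1) \<inter> add_coset Q (vs i2)"
      using that Q add_subgroup_zero by (simp add: add_coset_def)
    then show ?thesis using disj that by blast
  qed
  define tau where "tau j' = idx (vs j' - vs j + vs l)" for j'
  let ?A = "{j'\<in>I. psi (vs j') - psi (vs j) \<in> P}"
  let ?B = "{l'\<in>I. psi (vs l') - psi (vs l) \<in> P}"
  have "inj_on tau ?A"
  proof (rule inj_onI)
    fix j1 j2 assume "j1 \<in> ?A" "j2 \<in> ?A" and eq: "tau j1 = tau j2"
    have "(vs j1 - vs j + vs l - vs (tau j1)) - (vs j2 - vs j + vs l - vs (tau j2)) \<in> Q"
      using idx(2) add_subgroup_diff[OF Q] unfolding tau_def by blast
    then have "vs j1 - vs j2 \<in> Q" using eq by (simp add: algebra_simps)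
    then show "j1 = j2" using idx_unique \<open>j1 \<in> ?A\<close> \<open>j2 \<in> ?A\<close> by blast
  qed
  moreover have "tau ` ?A \<subseteq> ?B"
  proof
    fix y assume "y \<in> tau ` ?A"
    then obtain j' where j': "j' \<in> I" "psi (vs j') - psi (vs j) \<in> P" and y: "y = tau j'" by auto
    define q where "q = vs j' - vs j + vs l - vs y"
    have psi_q: "psi q \<in> P" using idx(2) psi_Q unfolding q_def y tau_def by blast
    have "vs y - vs l = (vs j' - vs j) - q" by (simp add: q_def algebra_simps)
    then have "psi (vs y) - psi (vs l) = (psi (vs j') - psi (vs j)) - psi q"
      by (metis additive.diff[OF psi])
    then show "y \<in> ?B"
      using psi_q j' add_subgroup_diff[OF P] idx(1) unfolding y tau_def by auto
  qed
  ultimately show ?thesis using I by (intro card_inj_on_le) auto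
qed

lemma card_transversal_class_eq:
  fixes psi :: "'a::ab_group_add \<Rightarrow> 'b::ab_group_add"
  assumes psi: "additive psi" and Q: "add_subgroup Q" and P: "add_subgroup P"
    and psi_Q: "psi ` Q \<subseteq> P"
    and cover: "(\<Union>j\<in>I. add_coset Q (vs j)) = UNIV"
    and disj: "\<forall>j\<in>I. \<forall>l\<in>I. j \<noteq> l \<longrightarrow> add_coset Q (vs j) \<inter> add_coset Q (vs l) = {}"
    and I: "finite I" "j \<in> I" "l \<in> I"
  shows "card {j'\<in>I. add_coset P (psi (vs j') + c) = add_coset P (psi (vs j) + c)}
       = card {l'\<in>I. add_coset P (psi (vs l') + c) = add_coset P (psi (vs l) + c)}"
proof -
  have class_iff: "{j'\<in>I. add_coset P (psi (vs j') + c) = add_coset P (psi (vs i) + c)}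
      = {j'\<in>I. psi (vs j') - psi (vs i) \<in> P}" for i
    using add_coset_eq_iff[OF P] by simp
  show ?thesis
    unfolding class_iff
    using card_transversal_class_le[OF assms(1-6)] I by (intro le_antisym) auto
qed

lemma additive_dotp: "additive (dotp f)"
  by unfold_locales (simp add: dotp_def distrib_left sum.distrib)

lemma additive_projT: "additive projT"
  by unfold_locales (auto simp: projT_def fun_eq_iff)

lemma additive_mat_app: "additive (mat_app M)"
  by unfold_locales (auto simp: mat_app_def fun_eq_iff distrib_left sum.distrib)

lemma vsum_add: "vsum (a + b) (c + d) = vsum a c + vsum b d"
  unfolding vsum_def by (auto simp: fun_eq_iff split: sum.splits)

lemma additive_vsum_left: "additive (\<lambda>s. vsum s 0)"
  by unfold_locales (metis add.right_neutral vsum_add)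

lemma vsum_split: "vsum u w = vsum u 0 + (vsum 0 w :: ('a::monoid_add, 's + 't) vecs)"
  using vsum_add[of u 0 0 w] by simp

lemma add_subgroup_perp: "add_subgroup (perp V)"
  unfolding add_subgroup_def perp_def
  by (simp add: additive.zero[OF additive_dotp] additive.diff[OF additive_dotp])

lemma compat_eq_add_coset: "compat (V, v) = add_coset (perp V) v"
proof -
  have "compat (V, v) = (\<lambda>m. m + v) ` perp V"
    unfolding compat_def by (simp add: plus_fun_def)
  also have "\<dots> = add_coset (perp V) v"
    unfolding add_coset_def by (auto simp: image_iff) (metis diff_add_cancel)
  finally show ?thesis .
qed

lemma marginalT_eq_add_coset:
  "marginalT E = add_coset (projT ` perp (fst E)) (projT (snd E))"
  using compat_eq_add_coset[of "fst E" "snd E"] image_add_coset[OF additive_projT]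
  by (simp add: marginalT_def)

lemma dotp_mat_app: "dotp f (mat_app M x) = dotp (mat_app (mat_transp M) f) x"
proof -
  have "dotp f (mat_app M x) = (\<Sum>i\<in>UNIV. \<Sum>j\<in>UNIV. f i * M i j * x j)"
    unfolding dotp_def mat_app_def by (simp add: sum_distrib_left mult.assoc)
  also have "\<dots> = (\<Sum>j\<in>UNIV. \<Sum>i\<in>UNIV. f i * M i j * x j)"
    by (rule sum.swap)
  also have "\<dots> = dotp (mat_app (mat_transp M) f) x"
    unfolding dotp_def mat_app_def mat_transp_def
    by (simp add: sum_distrib_left sum_distrib_right mult_ac)
  finally show ?thesis .
qed

lemma mat_app_perp: "m \<in> perp V \<Longrightarrow> mat_app M m \<in> perp {f. mat_app (mat_transp M) f \<in> V}"
  unfolding perp_def by (simp add: dotp_mat_app)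

lemma dotp_vsum_zero:
  "dotp f (vsum q (0::('a::comm_ring_1, 't::finite) vecs)) = dotp (projS f) (q :: ('a, 's::finite) vecs)"
proof -
  let ?inl = "\<lambda>(i, b). (Inl i, b) :: ('s + 't) \<times> bool"
  have "dotp f (vsum q 0) = (\<Sum>p\<in>range ?inl. f p * vsum q 0 p)"
    unfolding dotp_def
    by (rule sum.mono_neutral_right) (auto simp: vsum_def image_iff split: sum.splits)
  also have "\<dots> = dotp (projS f) q"
    unfolding dotp_def
    by (subst sum.reindex) (auto simp: inj_on_def vsum_def projS_def case_prod_unfold)
  finally show ?thesis .
qed

lemma vsum_zero_perp_subsum:
  "q \<in> perp V \<Longrightarrow> vsum q (0::('a::comm_ring_1, 't::finite) vecs) \<in> perp (subsum V (W :: ('a, 't) vecs set))"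
  unfolding perp_def subsum_def by (simp add: dotp_vsum_zero)

lemma marginalT_sympl_act_prod_state:
  "marginalT (sympl_act M (prod_state (V, u) (W, w)))
     = add_coset (projT ` perp {f. mat_app (mat_transp M) f \<in> subsum V W})
         (projT (mat_app M (vsum u 0)) + projT (mat_app M (vsum 0 w)))"
  by (simp add: marginalT_eq_add_coset sympl_act_def prod_state_def vsum_split[of u w]
      additive.add[OF additive_mat_app] additive.add[OF additive_projT])

theorem theorem6:
  fixes VS :: "('a::comm_ring_1, 's::finite) vecs set"
    and vs :: "nat \<Rightarrow> ('a, 's) vecs"
    and k :: nat
    and VT :: "('a, 't::finite) vecs set"
    and vT :: "('a, 't) vecs"
    and \<Sigma> :: "('a, 's + 't) mat"
  assumes scalars: "is_Zd_ring TYPE('a) \<or> is_real_ring TYPE('a)"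
    and VS_iso: "isotropic VS"
    and part_disj: "\<forall>j\<in>{1..k}. \<forall>l\<in>{1..k}. j \<noteq> l \<longrightarrow> compat (VS, vs j) \<inter> compat (VS, vs l) = {}"
    and part_cover: "(\<Union>j\<in>{1..k}. compat (VS, vs j)) = UNIV"
    and VT_iso: "isotropic VT"
    and sympl: "symplectic \<Sigma>"
  shows "(\<forall>j\<in>{1..k}. \<forall>l\<in>{1..k}.
            marginalT (sympl_act \<Sigma> (prod_state (VS, vs j) (VT, vT))) =
            marginalT (sympl_act \<Sigma> (prod_state (VS, vs l) (VT, vT)))
          \<or> marginalT (sympl_act \<Sigma> (prod_state (VS, vs j) (VT, vT))) \<inter>
            marginalT (sympl_act \<Sigma> (prod_state (VS, vs l) (VT, vT))) = {})
       \<and> (\<forall>j\<in>{1..k}. \<forall>l\<in>{1..k}.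
            card {j'\<in>{1..k}. marginalT (sympl_act \<Sigma> (prod_state (VS, vs j') (VT, vT))) =
                              marginalT (sympl_act \<Sigma> (prod_state (VS, vs j) (VT, vT)))}
          = card {l'\<in>{1..k}. marginalT (sympl_act \<Sigma> (prod_state (VS, vs l') (VT, vT))) =
                              marginalT (sympl_act \<Sigma> (prod_state (VS, vs l) (VT, vT)))})"
proof -
  define P where "P = projT ` perp {f. mat_app (mat_transp \<Sigma>) f \<in> subsum VS VT}"
  define psi where "psi s = projT (mat_app \<Sigma> (vsum s 0))" for s
  define c where "c = projT (mat_app \<Sigma> (vsum 0 vT))"
  have marginal: "marginalT (sympl_act \<Sigma> (prod_state (VS, v) (VT, vT))) = add_coset P (psi v + c)"
    for v
    unfolding P_def psi_def c_def by (rule marginalT_sympl_act_prod_state)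
  have P: "add_subgroup P"
    unfolding P_def by (rule add_subgroup_image[OF additive_projT add_subgroup_perp])
  have psi: "additive psi"
    unfolding psi_def
    by unfold_locales (simp add: additive.add[OF additive_vsum_left]
        additive.add[OF additive_mat_app] additive.add[OF additive_projT])
  have psi_perp: "psi ` perp VS \<subseteq> P"
    unfolding psi_def P_def using mat_app_perp vsum_zero_perp_subsum by blast
  note transversal = part_cover[unfolded compat_eq_add_coset] part_disj[unfolded compat_eq_add_coset]
  show ?thesis
    unfolding marginal
  proof (intro conjI ballI)
    fix j l assume j: "j \<in> {1..k}" and l: "l \<in> {1..k}"
    show "card {j'\<in>{1..k}. add_coset P (psi (vs j') + c) = add_coset P (psi (vs j) + c)}
        = card {l'\<in>{1..k}. add_coset P (psi (vs l') + c) = add_coset P (psi (vs l) + c)}"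
      by (rule card_transversal_class_eq[OF psi add_subgroup_perp P psi_perp transversal
            finite_atLeastAtMost j l])
  next
    fix j l show "add_coset P (psi (vs j) + c) = add_coset P (psi (vs l) + c)
        \<or> add_coset P (psi (vs j) + c) \<inter> add_coset P (psi (vs l) + c) = {}"
      by (rule add_coset_eq_or_disjoint[OF P])
  qed
qed

end
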